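(* Let $\mathcal H$ be a finite-dimensional complex Hilbert space and $\mathcal G$ a finite set of Hermitian operators on $\mathcal H$. Let $\Pi_{\mathcal Z}$ denote the orthogonal projection (with respect to the Hilbert–Schmidt inner product $\mathrm{tr}(O_1^\dagger O_2)$ on $\mathrm{End}(\mathcal H)$) onto the center $\mathcal Z_{\mathcal G}$. Then $$\Pi_{\mathcal Z}(\mathfrak L(\mathcal G))=\mathrm{span}\big(\Pi_{\mathcal Z}(\mathcal G)\big).$$
   Context: $\mathfrak L(\mathcal G)$ is the dynamical Lie algebra: the complex linear span of $\mathcal G$ and all nested commutators $[h_{\alpha_1},[h_{\alpha_2},\dots,[h_{\alpha_{n-1}},h_{\alpha_n}]\dots]]$ with $h_{\alpha_i}\in\mathcal G$. The bond algebra $\mathcal A_{\mathcal G}$ is the von Neumann algebra generated by $\mathcal G$ (with identity, closed under complex linear combinations, products and adjoints), the commutant is $\mathcal C_{\mathcal G}=\{Q:[Q,h]=0\ \forall h\in\mathcal G\}$, and the center is $\mathcal Z_{\mathcal G}=\mathcal A_{\mathcal G}\cap\mathcal C_{\mathcal G}$. *)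

theory Defs
  imports "HOL-Analysis.Analysis"
begin

text \<open>Operators on the finite-dimensional complex Hilbert space H = C^n, with n = CARD('n),
  are represented as complex matrices of type complex^'n^'n.\<close>

definition cscale :: "complex \<Rightarrow> complex^'n^'n \<Rightarrow> complex^'n^'n" where
  "cscale c A = (\<chi> i j. c * A $ i $ j)"

definition adj :: "complex^'n^'n \<Rightarrow> complex^'n^'n" where
  "adj A = (\<chi> i j. cnj (A $ j $ i))"

definition hermitian :: "complex^'n^'n \<Rightarrow> bool" where
  "hermitian A \<longleftrightarrow> adj A = A"

definition commutator :: "complex^'n^'n \<Rightarrow> complex^'n^'n \<Rightarrow> complex^'n^'n" where
  "commutator A B = A ** B - B ** A"

definition cspan :: "(complex^'n^'n) set \<Rightarrow> (complex^'n^'n) set" where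
  "cspan S = {X. \<exists>F c. finite F \<and> F \<subseteq> S \<and> X = (\<Sum>A\<in>F. cscale (c A) A)}"

definition hs_inner :: "complex^'n^'n \<Rightarrow> complex^'n^'n \<Rightarrow> complex" where
  "hs_inner A B = trace (adj A ** B)"

inductive_set nested_comms :: "(complex^'n^'n) set \<Rightarrow> (complex^'n^'n) set" for G where
  base: "h \<in> G \<Longrightarrow> h \<in> nested_comms G"
| step: "h \<in> G \<Longrightarrow> X \<in> nested_comms G \<Longrightarrow> commutator h X \<in> nested_comms G"

definition dla :: "(complex^'n^'n) set \<Rightarrow> (complex^'n^'n) set" where
  "dla G = cspan (nested_comms G)"

text \<open>Bond algebra: the (von Neumann) *-algebra generated by G, with identity. In finite
  dimension no topological closure is needed.\<close>
inductive_set bond_algebra :: "(complex^'n^'n) set \<Rightarrow> (complex^'n^'n) set" for G where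
  gen: "h \<in> G \<Longrightarrow> h \<in> bond_algebra G"
| one: "mat 1 \<in> bond_algebra G"
| add: "A \<in> bond_algebra G \<Longrightarrow> B \<in> bond_algebra G \<Longrightarrow> A + B \<in> bond_algebra G"
| scale: "A \<in> bond_algebra G \<Longrightarrow> cscale c A \<in> bond_algebra G"
| mult: "A \<in> bond_algebra G \<Longrightarrow> B \<in> bond_algebra G \<Longrightarrow> A ** B \<in> bond_algebra G"
| adjoint: "A \<in> bond_algebra G \<Longrightarrow> adj A \<in> bond_algebra G"

definition commutant :: "(complex^'n^'n) set \<Rightarrow> (complex^'n^'n) set" where
  "commutant G = {Q. \<forall>h\<in>G. Q ** h = h ** Q}"

definition center :: "(complex^'n^'n) set \<Rightarrow> (complex^'n^'n) set" where
  "center G = bond_algebra G \<inter> commutant G"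

definition orth_proj :: "(complex^'n^'n) set \<Rightarrow> complex^'n^'n \<Rightarrow> complex^'n^'n" where
  "orth_proj Z X = (THE Y. Y \<in> Z \<and> (\<forall>W\<in>Z. hs_inner W (X - Y) = 0))"

end

theory Submission imports Defs begin

text \<open>The projection \<open>P\<close> onto the center is complex linear, so it maps the span of the nested
  commutators onto the span of their projections. A genuine commutator \<open>[h, X]\<close> with
  \<open>h \<in> G\<close> is Hilbert-Schmidt orthogonal to the center: an element \<open>W\<close> of the center commutes
  with \<open>h\<close>, hence so does \<open>W\<^sup>\<dagger>\<close> because \<open>h\<close> is Hermitian, and then
  \<open>tr (W\<^sup>\<dagger> [h, X]) = tr ([W\<^sup>\<dagger>, h] X) = 0\<close>. Hence \<open>P\<close> kills all nested commutators and only the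
  projections of the generators survive.\<close>

global_interpretation cmatrix: vector_space "cscale :: complex \<Rightarrow> complex^'n^'n \<Rightarrow> complex^'n^'n"
  by unfold_locales (simp_all add: cscale_def vec_eq_iff algebra_simps)

lemma cspan_eq_span: "cspan S = cmatrix.span S"
  unfolding cspan_def cmatrix.span_explicit by blast

lemma cscale_of_real: "cscale (of_real r) A = r *\<^sub>R A"
  by (simp add: cscale_def vec_eq_iff flip: scaleR_conv_of_real)

lemma cscale_matrix_mult_left: "cscale c A ** B = cscale c (A ** B)"
  by (simp add: cscale_def matrix_matrix_mult_def vec_eq_iff sum_distrib_left mult.assoc)

lemma cscale_matrix_mult_right: "A ** cscale c B = cscale c (A ** B)"
  by (simp add: cscale_def matrix_matrix_mult_def vec_eq_iff sum_distrib_left algebra_simps)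

lemma matrix_add_rdistrib: "(A + B) ** C = A ** C + B ** C"
  by (simp add: matrix_matrix_mult_def vec_eq_iff sum.distrib distrib_right)

lemma adj_matrix_mult: "adj (A ** B) = adj B ** adj A"
  by (simp add: adj_def matrix_matrix_mult_def vec_eq_iff mult.commute)

lemma adj_cscale: "adj (cscale c A) = cscale (cnj c) (adj A)"
  by (simp add: adj_def cscale_def vec_eq_iff)

lemma hs_inner_add_right: "hs_inner W (A + B) = hs_inner W A + hs_inner W B"
  by (simp add: hs_inner_def matrix_add_ldistrib trace_add)

lemma hs_inner_diff_right: "hs_inner W (A - B) = hs_inner W A - hs_inner W B"
  by (simp add: hs_inner_def trace_def matrix_matrix_mult_def sum_subtractf right_diff_distrib)

lemma hs_inner_cscale_right: "hs_inner W (cscale c A) = c * hs_inner W A"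
  unfolding hs_inner_def cscale_matrix_mult_right by (simp add: trace_def cscale_def sum_distrib_left)

lemma hs_inner_cscale_left: "hs_inner (cscale c W) A = cnj c * hs_inner W A"
  unfolding hs_inner_def adj_cscale cscale_matrix_mult_left
  by (simp add: trace_def cscale_def sum_distrib_left)

lemma Re_hs_inner: "Re (hs_inner A B) = inner A B"
proof -
  have "Re (hs_inner A B) = (\<Sum>i\<in>UNIV. \<Sum>k\<in>UNIV. inner (A $ k $ i) (B $ k $ i))"
    by (simp add: hs_inner_def trace_def adj_def matrix_matrix_mult_def Re_sum inner_complex_def)
  also have "\<dots> = inner A B"
    by (subst sum.swap) (simp add: inner_vec_def)
  finally show ?thesis .
qed

lemma hs_inner_self_eq_0: "hs_inner A A = 0 \<longleftrightarrow> A = 0"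
proof
  assume "hs_inner A A = 0"
  then have "inner A A = 0" by (simp flip: Re_hs_inner)
  then show "A = 0" by simp
qed (simp add: hs_inner_def trace_def)

lemma subspace_if_cmatrix_subspace: "cmatrix.subspace Z \<Longrightarrow> subspace Z"
  unfolding subspace_def cmatrix.subspace_def by (metis cscale_of_real)

lemma orth_proj_eqI:
  assumes Z: "cmatrix.subspace Z" and "Y \<in> Z" and Y_orth: "\<And>W. W \<in> Z \<Longrightarrow> hs_inner W (X - Y) = 0"
  shows "orth_proj Z X = Y"
  unfolding orth_proj_def
proof (rule the_equality)
  show "Y \<in> Z \<and> (\<forall>W\<in>Z. hs_inner W (X - Y) = 0)" using assms by blast
next
  fix Y' assume Y': "Y' \<in> Z \<and> (\<forall>W\<in>Z. hs_inner W (X - Y') = 0)"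
  have "Y - Y' \<in> Z" using Z \<open>Y \<in> Z\<close> Y' by (simp add: cmatrix.subspace_diff)
  have "hs_inner (Y - Y') (Y - Y') = hs_inner (Y - Y') (X - Y') - hs_inner (Y - Y') (X - Y)"
    by (simp flip: hs_inner_diff_right)
  also have "\<dots> = 0" using Y' Y_orth \<open>Y - Y' \<in> Z\<close> by simp
  finally show "Y' = Y" by (simp add: hs_inner_self_eq_0)
qed

text \<open>Existence reduces to the real orthogonal decomposition in the Euclidean space of matrices,
  because the real part of \<open>hs_inner\<close> is the Euclidean inner product and \<open>Z\<close> is closed under
  multiplication by \<open>\<i>\<close>.\<close>
lemma orth_proj_exists:
  assumes Z: "cmatrix.subspace Z"
  obtains Y where "Y \<in> Z" "\<And>W. W \<in> Z \<Longrightarrow> hs_inner W (X - Y) = 0"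
proof -
  have span_Z: "span Z = Z" using subspace_if_cmatrix_subspace[OF Z] by simp
  obtain Y V where "Y \<in> Z" and V_orth: "\<And>W. W \<in> Z \<Longrightarrow> inner V W = 0" and "X = Y + V"
    using orthogonal_subspace_decomp_exists[of Z X] unfolding span_Z orthogonal_def by metis
  have "hs_inner W (X - Y) = 0" if "W \<in> Z" for W
  proof -
    have "Re (hs_inner W V) = 0" by (simp add: that V_orth Re_hs_inner inner_commute)
    moreover have "Im (hs_inner W V) = 0"
    proof -
      have "cscale \<i> W \<in> Z" using Z that by (rule cmatrix.subspace_scale)
      then have "Re (hs_inner (cscale \<i> W) V) = 0" by (simp add: V_orth Re_hs_inner inner_commute)
      then show ?thesis by (simp add: hs_inner_cscale_left)
    qed
    ultimately show ?thesis using \<open>X = Y + V\<close> by (simp add: complex_eq_iff)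
  qed
  with \<open>Y \<in> Z\<close> show ?thesis by (rule that)
qed

lemma orth_proj:
  assumes "cmatrix.subspace Z"
  shows "orth_proj Z X \<in> Z" "\<And>W. W \<in> Z \<Longrightarrow> hs_inner W (X - orth_proj Z X) = 0"
  by (metis assms orth_proj_eqI orth_proj_exists)+

lemma linear_orth_proj:
  assumes Z: "cmatrix.subspace Z"
  shows "Vector_Spaces.linear cscale cscale (orth_proj Z)"
proof -
  have "orth_proj Z (A + B) = orth_proj Z A + orth_proj Z B" for A B
  proof (rule orth_proj_eqI[OF Z])
    show "orth_proj Z A + orth_proj Z B \<in> Z"
      using Z by (simp add: orth_proj cmatrix.subspace_add)
    fix W assume "W \<in> Z"
    have "A + B - (orth_proj Z A + orth_proj Z B) = (A - orth_proj Z A) + (B - orth_proj Z B)"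
      by simp
    then show "hs_inner W (A + B - (orth_proj Z A + orth_proj Z B)) = 0"
      by (simp only: hs_inner_add_right orth_proj(2)[OF Z \<open>W \<in> Z\<close>]) simp
  qed
  moreover have "orth_proj Z (cscale c A) = cscale c (orth_proj Z A)" for c A
  proof (rule orth_proj_eqI[OF Z])
    show "cscale c (orth_proj Z A) \<in> Z"
      using Z by (simp add: orth_proj cmatrix.subspace_scale)
    fix W assume "W \<in> Z"
    then show "hs_inner W (cscale c A - cscale c (orth_proj Z A)) = 0"
      using orth_proj(2)[OF Z]
      by (simp add: hs_inner_cscale_right flip: cmatrix.scale_right_diff_distrib)
  qed
  ultimately show ?thesis
    unfolding Vector_Spaces.linear_iff using cmatrix.vector_space_axioms by blast
qed

lemma subspace_bond_algebra: "cmatrix.subspace (bond_algebra G)"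
proof (rule cmatrix.subspaceI)
  have "cscale 0 (mat 1) \<in> bond_algebra G" by (intro bond_algebra.scale bond_algebra.one)
  then show "0 \<in> bond_algebra G" by simp
qed (fact bond_algebra.add bond_algebra.scale)+

lemma subspace_commutant: "cmatrix.subspace (commutant G)"
  by (rule cmatrix.subspaceI)
    (auto simp: commutant_def matrix_add_ldistrib matrix_add_rdistrib
      cscale_matrix_mult_left cscale_matrix_mult_right)

lemma subspace_center: "cmatrix.subspace (center G)"
  unfolding center_def by (intro cmatrix.subspace_inter subspace_bond_algebra subspace_commutant)

lemma hs_inner_commutator_eq_0:
  assumes "W ** h = h ** W" and "hermitian h"
  shows "hs_inner W (commutator h X) = 0"
proof -
  have "adj W ** h = h ** adj W"
    using arg_cong[OF assms(1), of adj] assms(2) by (simp add: adj_matrix_mult hermitian_def)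
  then have "trace (adj W ** (X ** h)) = trace (adj W ** (h ** X))"
    by (metis matrix_mul_assoc trace_mul_sym)
  then show ?thesis
    unfolding commutator_def hs_inner_diff_right by (simp add: hs_inner_def)
qed

lemma orth_proj_center_commutator:
  assumes "h \<in> G" and "hermitian h"
  shows "orth_proj (center G) (commutator h X) = 0"
proof (rule orth_proj_eqI[OF subspace_center])
  show "0 \<in> center G" using subspace_center by (rule cmatrix.subspace_0)
  fix W assume "W \<in> center G"
  then have "W ** h = h ** W" using \<open>h \<in> G\<close> by (simp add: center_def commutant_def)
  then show "hs_inner W (commutator h X - 0) = 0"
    using \<open>hermitian h\<close> by (simp add: hs_inner_commutator_eq_0)
qed

lemma orth_proj_center_nested_comms:
  assumes "\<forall>h\<in>G. hermitian h"
  shows "orth_proj (center G) ` nested_comms G \<subseteq> insert 0 (orth_proj (center G) ` G)"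
proof (rule image_subsetI)
  fix X assume "X \<in> nested_comms G"
  then show "orth_proj (center G) X \<in> insert 0 (orth_proj (center G) ` G)"
    by cases (simp_all add: assms orth_proj_center_commutator)
qed

theorem lemma5:
  fixes G :: "(complex^'n^'n) set"
  assumes "finite G"
    and "\<forall>h\<in>G. hermitian h"
  shows "orth_proj (center G) ` dla G = cspan (orth_proj (center G) ` G)"
proof -
  let ?P = "orth_proj (center G)"
  interpret P: Vector_Spaces.linear cscale cscale ?P
    by (rule linear_orth_proj[OF subspace_center])
  have "cmatrix.span (?P ` nested_comms G) \<subseteq> cmatrix.span (?P ` G)"
    using cmatrix.span_mono[OF orth_proj_center_nested_comms[OF assms(2)]] by simp
  moreover have "?P ` G \<subseteq> ?P ` nested_comms G"
    by (auto intro: nested_comms.base)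
  ultimately have "cmatrix.span (?P ` nested_comms G) = cmatrix.span (?P ` G)"
    by (auto dest: cmatrix.span_mono)
  then show ?thesis
    unfolding dla_def cspan_eq_span P.span_image[symmetric] .
qed

end
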